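(* Let $(A,\rhd,\lhd,\succ,\prec)$ be a pre-dual pre-Poisson algebra. (a) With $x\circ y=x\rhd y+x\lhd y$ and $[x,y]=x\succ y+x\prec y$, $(A,\circ,[\cdot,\cdot])$ is a dual pre-Poisson algebra, and $(A;L_\rhd,R_\lhd,L_\succ,R_\prec)$ is a representation of $(A,\circ,[\cdot,\cdot])$. (b) Suppose moreover that $x\lhd y=y\rhd x$ and $x\prec y=-y\succ x$ for all $x,y\in A$. Then with $x\diamond y=x\succ y$ and $x\odot y=x\rhd y$, $(A,\diamond,\odot)$ is a pre-Poisson algebra, and $(A,\bullet,\{\cdot,\cdot\})$ with $x\bullet y=x\odot y+y\odot x$, $\{x,y\}=x\diamond y-y\diamond x$ is a Poisson algebra.
   Context: Field $\mathbb{F}$ of characteristic $0$. $L_\diamond(x)y=x\diamond y$, $R_\diamond(x)y=y\diamond x$. A pre-dual pre-Poisson algebra: bilinear $\rhd,\lhd,\succ,\prec$ with, for all $x,y,z$: $x\lhd(y\lhd z+y\rhd z)=(x\lhd y)\lhd z=(y\rhd x)\lhd z=y\rhd(x\lhd z)$; $x\rhd(y\rhd z)=(x\lhd y+x\rhd y)\rhd z=(y\lhd x+y\rhd x)\rhd z$; $(x\prec y+x\succ y)\succ z=x\succ(y\succ z)-y\succ(x\succ z)$; $(x\succ y)\prec z=-(y\prec x)\prec z$; $x\prec(y\prec z+y\succ z)=(x\prec y)\prec z+y\succ(x\prec z)$; $x\prec(y\rhd z+y\lhd z)=(x\prec y)\lhd z+y\rhd(x\prec z)$; $x\succ(y\lhd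 z)=(x\succ y)\lhd z+y\lhd(x\succ z+x\prec z)$; $x\succ(y\rhd z)=(x\succ y+x\prec y)\rhd z+y\rhd(x\succ z)$; $(x\lhd y)\prec z=x\lhd(y\succ z+y\prec z)+y\rhd(x\prec z)$; $(x\rhd y+x\lhd y)\succ z=x\rhd(y\succ z)+y\rhd(x\succ z)$; $(x\rhd y-y\lhd x)\prec z=0$; $(x\succ y+y\prec x)\lhd z=0$; $(x\succ y+x\prec y+y\succ x+y\prec x)\rhd z=0$. A dual pre-Poisson algebra: $x\circ(y\circ z)=(x\circ y)\circ z=(y\circ x)\circ z$; $[x,[y,z]]=[[x,y],z]+[y,[x,z]]$; $[x,y\circ z]=[x,y]\circ z+y\circ[x,z]$; $[x\circ y,z]=x\circ[y,z]+y\circ[x,z]$; $[x,y]\circ z=-[y,x]\circ z$. A representation $(V;l_\circ,r_\circ,l_{[\cdot,\cdot]},r_{[\cdot,\cdot]})$ of it: linear maps $A\to\mathrm{End}(V)$ with $r_\circ(x)r_\circ(y)=r_\circ(y\circ x)=l_\circ(y)r_\circ(x)=r_\circ(x)l_\circ(y)$; $l_\circ(x\circ y)=l_\circ(x)l_\circ(y)=l_\circ(y)l_\circ(x)$; $l_{[\cdot,\cdot]}([x,y])=l_{[\cdot,\cdot]}(x)l_{[\cdot,\cdot]}(y)-l_{[\cdot,\cdot]}(y)l_{[\cdot,\cdot]}(x)$; $r_{[\cdot,\cdot]}([x,y])=r_{[\cdot,\cdot]}(y)r_{[\cdot,\cdot]}(x)+l_{[\cdot,\cdot]}(x)r_{[\cdot,\cdot]}(y)$;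 $r_{[\cdot,\cdot]}(x)r_{[\cdot,\cdot]}(y)=-r_{[\cdot,\cdot]}(x)l_{[\cdot,\cdot]}(y)$; $r_{[\cdot,\cdot]}(x\circ y)=r_\circ(y)r_{[\cdot,\cdot]}(x)+l_\circ(x)r_{[\cdot,\cdot]}(y)$; $l_{[\cdot,\cdot]}(x)r_\circ(y)=r_\circ(y)l_{[\cdot,\cdot]}(x)+r_\circ([x,y])$; $l_{[\cdot,\cdot]}(x)l_\circ(y)=l_\circ([x,y])+l_\circ(y)l_{[\cdot,\cdot]}(x)$; $r_{[\cdot,\cdot]}(x)r_\circ(y)=r_\circ([y,x])+l_\circ(y)r_{[\cdot,\cdot]}(x)$; $l_{[\cdot,\cdot]}(x\circ y)=l_\circ(x)l_{[\cdot,\cdot]}(y)+l_\circ(y)l_{[\cdot,\cdot]}(x)$; $r_{[\cdot,\cdot]}(x)(l_\circ-r_\circ)(y)=0$; $r_\circ(x)(l_{[\cdot,\cdot]}+r_{[\cdot,\cdot]})(y)=0$; $l_\circ([x,y]+[y,x])=0$. A pre-Poisson algebra $(A,\diamond,\odot)$: $x\diamond(y\diamond z)-(x\diamond y)\diamond z=y\diamond(x\diamond z)-(y\diamond x)\diamond z$; $x\odot(y\odot z)=(x\odot y+y\odot x)\odot z$; $(x\diamond y-y\diamond x)\odot z=x\diamond(y\odot z)-y\odot(x\diamond z)$; $(x\odot y+y\odot x)\diamond z=x\odot(y\diamond z)+y\odot(x\diamond z)$. A Poisson algebra: commutative associative $\bullet$, Lie bracket $\{\cdot,\cdot\}$, $\{x,y\bullet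 z\}=\{x,y\}\bullet z+y\bullet\{x,z\}$. *)

theory Defs
  imports Complex_Main
begin

definition bilinear_op :: "('k::field \<Rightarrow> 'a::ab_group_add \<Rightarrow> 'a) \<Rightarrow> ('a \<Rightarrow> 'a \<Rightarrow> 'a) \<Rightarrow> bool" where
  "bilinear_op s m \<longleftrightarrow> (\<forall>x. Vector_Spaces.linear s s (m x)) \<and> (\<forall>y. Vector_Spaces.linear s s (\<lambda>x. m x y))"

definition pre_dual_pre_Poisson ::
  "('k::field \<Rightarrow> 'a::ab_group_add \<Rightarrow> 'a) \<Rightarrow> ('a \<Rightarrow> 'a \<Rightarrow> 'a) \<Rightarrow> ('a \<Rightarrow> 'a \<Rightarrow> 'a)
     \<Rightarrow> ('a \<Rightarrow> 'a \<Rightarrow> 'a) \<Rightarrow> ('a \<Rightarrow> 'a \<Rightarrow> 'a) \<Rightarrow> bool" where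
  "pre_dual_pre_Poisson s rh lh su pr \<longleftrightarrow>
     bilinear_op s rh \<and> bilinear_op s lh \<and> bilinear_op s su \<and> bilinear_op s pr \<and>
     (\<forall>x y z.
        lh x (lh y z + rh y z) = lh (lh x y) z \<and>
        lh (lh x y) z = lh (rh y x) z \<and>
        lh (rh y x) z = rh y (lh x z) \<and>
        rh x (rh y z) = rh (lh x y + rh x y) z \<and>
        rh (lh x y + rh x y) z = rh (lh y x + rh y x) z \<and>
        su (pr x y + su x y) z = su x (su y z) - su y (su x z) \<and>
        pr (su x y) z = - pr (pr y x) z \<and>
        pr x (pr y z + su y z) = pr (pr x y) z + su y (pr x z) \<and>
        pr x (rh y z + lh y z) = lh (pr x y) z + rh y (pr x z) \<and>
        su x (lh y z) = lh (su x y) z + lh y (su x z + pr x z) \<and>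
        su x (rh y z) = rh (su x y + pr x y) z + rh y (su x z) \<and>
        pr (lh x y) z = lh x (su y z + pr y z) + rh y (pr x z) \<and>
        su (rh x y + lh x y) z = rh x (su y z) + rh y (su x z) \<and>
        pr (rh x y - lh y x) z = 0 \<and>
        lh (su x y + pr y x) z = 0 \<and>
        rh (su x y + pr x y + su y x + pr y x) z = 0)"

definition dual_pre_Poisson ::
  "('k::field \<Rightarrow> 'a::ab_group_add \<Rightarrow> 'a) \<Rightarrow> ('a \<Rightarrow> 'a \<Rightarrow> 'a) \<Rightarrow> ('a \<Rightarrow> 'a \<Rightarrow> 'a) \<Rightarrow> bool" where
  "dual_pre_Poisson s c b \<longleftrightarrow>
     bilinear_op s c \<and> bilinear_op s b \<and>
     (\<forall>x y z.
        c x (c y z) = c (c x y) z \<and>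
        c (c x y) z = c (c y x) z \<and>
        b x (b y z) = b (b x y) z + b y (b x z) \<and>
        b x (c y z) = c (b x y) z + c y (b x z) \<and>
        b (c x y) z = c x (b y z) + c y (b x z) \<and>
        c (b x y) z = - c (b y x) z)"

definition lin_to_End ::
  "('k::field \<Rightarrow> 'a::ab_group_add \<Rightarrow> 'a) \<Rightarrow> ('k \<Rightarrow> 'v::ab_group_add \<Rightarrow> 'v) \<Rightarrow> ('a \<Rightarrow> 'v \<Rightarrow> 'v) \<Rightarrow> bool" where
  "lin_to_End sA sV l \<longleftrightarrow> (\<forall>x. Vector_Spaces.linear sV sV (l x)) \<and>
     (\<forall>a x y v. l (sA a x + y) v = sV a (l x v) + l y v)"

definition dual_pre_Poisson_rep ::
  "('k::field \<Rightarrow> 'a::ab_group_add \<Rightarrow> 'a) \<Rightarrow> ('a \<Rightarrow> 'a \<Rightarrow> 'a) \<Rightarrow> ('a \<Rightarrow> 'a \<Rightarrow> 'a) \<Rightarrow>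
   ('k \<Rightarrow> 'v::ab_group_add \<Rightarrow> 'v) \<Rightarrow> ('a \<Rightarrow> 'v \<Rightarrow> 'v) \<Rightarrow> ('a \<Rightarrow> 'v \<Rightarrow> 'v) \<Rightarrow>
   ('a \<Rightarrow> 'v \<Rightarrow> 'v) \<Rightarrow> ('a \<Rightarrow> 'v \<Rightarrow> 'v) \<Rightarrow> bool" where
  "dual_pre_Poisson_rep sA c b sV lc rc lb rb \<longleftrightarrow>
     vector_space sV \<and>
     lin_to_End sA sV lc \<and> lin_to_End sA sV rc \<and> lin_to_End sA sV lb \<and> lin_to_End sA sV rb \<and>
     (\<forall>x y.
        rc x \<circ> rc y = rc (c y x) \<and>
        rc (c y x) = lc y \<circ> rc x \<and>
        lc y \<circ> rc x = rc x \<circ> lc y \<and>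
        lc (c x y) = lc x \<circ> lc y \<and>
        lc x \<circ> lc y = lc y \<circ> lc x \<and>
        lb (b x y) = (\<lambda>v. (lb x \<circ> lb y) v - (lb y \<circ> lb x) v) \<and>
        rb (b x y) = (\<lambda>v. (rb y \<circ> rb x) v + (lb x \<circ> rb y) v) \<and>
        rb x \<circ> rb y = (\<lambda>v. - (rb x \<circ> lb y) v) \<and>
        rb (c x y) = (\<lambda>v. (rc y \<circ> rb x) v + (lc x \<circ> rb y) v) \<and>
        lb x \<circ> rc y = (\<lambda>v. (rc y \<circ> lb x) v + rc (b x y) v) \<and>
        lb x \<circ> lc y = (\<lambda>v. lc (b x y) v + (lc y \<circ> lb x) v) \<and>
        rb x \<circ> rc y = (\<lambda>v. rc (b y x) v + (lc y \<circ> rb x) v) \<and>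
        lb (c x y) = (\<lambda>v. (lc x \<circ> lb y) v + (lc y \<circ> lb x) v) \<and>
        rb x \<circ> (\<lambda>v. lc y v - rc y v) = (\<lambda>v. 0) \<and>
        rc x \<circ> (\<lambda>v. lb y v + rb y v) = (\<lambda>v. 0) \<and>
        lc (b x y + b y x) = (\<lambda>v. 0))"

definition pre_Poisson ::
  "('k::field \<Rightarrow> 'a::ab_group_add \<Rightarrow> 'a) \<Rightarrow> ('a \<Rightarrow> 'a \<Rightarrow> 'a) \<Rightarrow> ('a \<Rightarrow> 'a \<Rightarrow> 'a) \<Rightarrow> bool" where
  "pre_Poisson s d od \<longleftrightarrow>
     bilinear_op s d \<and> bilinear_op s od \<and>
     (\<forall>x y z.
        d x (d y z) - d (d x y) z = d y (d x z) - d (d y x) z \<and>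
        od x (od y z) = od (od x y + od y x) z \<and>
        od (d x y - d y x) z = d x (od y z) - od y (d x z) \<and>
        d (od x y + od y x) z = od x (d y z) + od y (d x z))"

definition Poisson ::
  "('k::field \<Rightarrow> 'a::ab_group_add \<Rightarrow> 'a) \<Rightarrow> ('a \<Rightarrow> 'a \<Rightarrow> 'a) \<Rightarrow> ('a \<Rightarrow> 'a \<Rightarrow> 'a) \<Rightarrow> bool" where
  "Poisson s m br \<longleftrightarrow>
     bilinear_op s m \<and> bilinear_op s br \<and>
     (\<forall>x y z.
        m x y = m y x \<and>
        m (m x y) z = m x (m y z) \<and>
        br x x = 0 \<and>
        br x (br y z) + br y (br z x) + br z (br x y) = 0 \<and>
        br x (m y z) = m (br x y) z + m y (br x z))"

end

theory Submission
  imports Defs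
begin

text \<open>Each identity to be proved is multilinear, and once all products are expanded by
  bilinearity its two sides differ by a signed sum of at most four instances of the defining
  identities of a pre-dual pre-Poisson algebra.  Under the hypotheses of (b) four of these
  identities become exactly the axioms of a pre-Poisson algebra with \<open>\<diamond> = \<succ>\<close> and
  \<open>\<odot> = \<rhd>\<close>; and in any pre-Poisson algebra the symmetrized Zinbiel product and the
  commutator of the pre-Lie product form a Poisson algebra (Aguiar).\<close>

lemma bilinear_op_simps:
  assumes "bilinear_op s f"
  shows "f (a + b) c = f a c + f b c" "f a (b + c) = f a b + f a c"
    "f (- a) c = - f a c" "f a (- b) = - f a b"
    "f (a - b) c = f a c - f b c" "f a (b - c) = f a b - f a c"
    "f 0 c = 0" "f a 0 = 0"
    "f (s k a) c = s k (f a c)" "f a (s k b) = s k (f a b)"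
proof -
  have left: "module_hom s s (\<lambda>x. f x c)" for c
    using assms by (simp add: bilinear_op_def module_hom_iff_linear)
  have right: "module_hom s s (f a)" for a
    using assms by (simp add: bilinear_op_def module_hom_iff_linear)
  show "f (a + b) c = f a c + f b c" "f (- a) c = - f a c" "f (a - b) c = f a c - f b c"
    "f 0 c = 0" "f (s k a) c = s k (f a c)"
    using module_hom.add[OF left] module_hom.neg[OF left] module_hom.diff[OF left]
      module_hom.zero[OF left] module_hom.scale[OF left] by simp_all
  show "f a (b + c) = f a b + f a c" "f a (- b) = - f a b" "f a (b - c) = f a b - f a c"
    "f a 0 = 0" "f a (s k b) = s k (f a b)"
    using module_hom.add[OF right] module_hom.neg[OF right] module_hom.diff[OF right]
      module_hom.zero[OF right] module_hom.scale[OF right] by simp_all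
qed

lemma bilinear_op_vector_space: "bilinear_op s f \<Longrightarrow> vector_space s"
  unfolding bilinear_op_def Vector_Spaces.linear_def by blast

lemma bilinear_op_swap: "bilinear_op s f \<Longrightarrow> bilinear_op s (\<lambda>x y. f y x)"
  by (simp add: bilinear_op_def)

lemma bilinear_op_add:
  assumes "bilinear_op s f" and "bilinear_op s g"
  shows "bilinear_op s (\<lambda>x y. f x y + g x y)"
proof -
  interpret vector_space_pair s s
    using bilinear_op_vector_space[OF assms(1)] by (simp add: vector_space_pair_def)
  show ?thesis
    using assms by (simp add: bilinear_op_def linear_compose_add)
qed

lemma bilinear_op_diff:
  assumes "bilinear_op s f" and "bilinear_op s g"
  shows "bilinear_op s (\<lambda>x y. f x y - g x y)"
proof -
  interpret vector_space_pair s s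
    using bilinear_op_vector_space[OF assms(1)] by (simp add: vector_space_pair_def)
  show ?thesis
    using assms by (simp add: bilinear_op_def linear_compose_sub)
qed

lemma lin_to_End_if_bilinear_op:
  assumes "bilinear_op s f"
  shows "lin_to_End s s f"
  using assms bilinear_op_simps[OF assms] by (simp add: lin_to_End_def bilinear_op_def)

lemma eq_by_combination1:
  fixes L :: "'a::ab_group_add"
  assumes "A\<^sub>1 = B\<^sub>1" and "L - R = A\<^sub>1 - B\<^sub>1"
  shows "L = R"
  using assms by simp

lemma eq_by_combination3:
  fixes L :: "'a::ab_group_add"
  assumes "A\<^sub>1 = B\<^sub>1" "A\<^sub>2 = B\<^sub>2" "A\<^sub>3 = B\<^sub>3"
    and "L - R = (A\<^sub>1 - B\<^sub>1) + (A\<^sub>2 - B\<^sub>2) + (A\<^sub>3 - B\<^sub>3)"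
  shows "L = R"
  using assms by simp

lemma eq_by_combination4:
  fixes L :: "'a::ab_group_add"
  assumes "A\<^sub>1 = B\<^sub>1" "A\<^sub>2 = B\<^sub>2" "A\<^sub>3 = B\<^sub>3" "A\<^sub>4 = B\<^sub>4"
    and "L - R = (A\<^sub>1 - B\<^sub>1) + (A\<^sub>2 - B\<^sub>2) + (A\<^sub>3 - B\<^sub>3) + (A\<^sub>4 - B\<^sub>4)"
  shows "L = R"
  using assms by simp

lemma Poisson_if_pre_Poisson:
  assumes "pre_Poisson s d od"
  shows "Poisson s (\<lambda>x y. od x y + od y x) (\<lambda>x y. d x y - d y x)"
proof -
  have d: "bilinear_op s d" and od: "bilinear_op s od"
    using assms by (simp_all add: pre_Poisson_def)
  have pre_Lie: "d x (d y z) - d (d x y) z = d y (d x z) - d (d y x) z"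
    and Zinbiel: "od x (od y z) = od (od x y + od y x) z"
    and od_commutator_left: "od (d x y - d y x) z = d x (od y z) - od y (d x z)"
    and d_symmetrized_left: "d (od x y + od y x) z = od x (d y z) + od y (d x z)" for x y z
    using assms by (simp_all add: pre_Poisson_def)
  note [simp] = bilinear_op_simps[OF d] bilinear_op_simps[OF od]
  show ?thesis
    unfolding Poisson_def
  proof (intro conjI allI)
    show "bilinear_op s (\<lambda>x y. od x y + od y x)"
      by (intro bilinear_op_add od bilinear_op_swap)
    show "bilinear_op s (\<lambda>x y. d x y - d y x)"
      by (intro bilinear_op_diff d bilinear_op_swap)
  next
    fix x y z
    show "od x y + od y x = od y x + od x y"
      by (rule add.commute)
    show "d x x - d x x = 0"
      by simp
    show "od (od x y + od y x) z + od z (od x y + od y x)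
        = od x (od y z + od z y) + od (od y z + od z y) x"
      by (rule eq_by_combination4[OF Zinbiel[of x y z, symmetric] Zinbiel[of z x y]
            Zinbiel[of x z y, symmetric] Zinbiel[of z y x]]) (simp add: algebra_simps)
    show "d x (d y z - d z y) - d (d y z - d z y) x + (d y (d z x - d x z) - d (d z x - d x z) y)
        + (d z (d x y - d y x) - d (d x y - d y x) z) = 0"
      by (rule eq_by_combination3[OF pre_Lie[of x y z] pre_Lie[of y z x] pre_Lie[of z x y]])
        (simp add: algebra_simps)
    show "d x (od y z + od z y) - d (od y z + od z y) x
        = od (d x y - d y x) z + od z (d x y - d y x) + (od y (d x z - d z x) + od (d x z - d z x) y)"
      by (rule eq_by_combination3[OF od_commutator_left[of x y z, symmetric]
            od_commutator_left[of x z y, symmetric] d_symmetrized_left[of y z x, symmetric]])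
        (simp add: algebra_simps)
  qed
qed

locale pre_dual_pre_Poisson_algebra =
  fixes s :: "'k::field \<Rightarrow> 'a::ab_group_add \<Rightarrow> 'a"
    and rh lh su pr :: "'a \<Rightarrow> 'a \<Rightarrow> 'a"
  assumes pre_dual_pre_Poisson: "pre_dual_pre_Poisson s rh lh su pr"
begin

lemma bilinear: "bilinear_op s rh" "bilinear_op s lh" "bilinear_op s su" "bilinear_op s pr"
  using pre_dual_pre_Poisson by (simp_all add: pre_dual_pre_Poisson_def)

lemmas [simp] = bilinear_op_simps[OF bilinear(1)] bilinear_op_simps[OF bilinear(2)]
  bilinear_op_simps[OF bilinear(3)] bilinear_op_simps[OF bilinear(4)]

lemma vector_space: "vector_space s"
  by (rule bilinear_op_vector_space[OF bilinear(1)])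

lemma
  shows lh_circ_right: "lh x (lh y z + rh y z) = lh (lh x y) z"
    and lh_lh_left: "lh (lh x y) z = lh (rh y x) z"
    and lh_rh_left: "lh (rh x y) z = rh x (lh y z)"
    and rh_rh_right: "rh x (rh y z) = rh (lh x y + rh x y) z"
    and rh_circ_left: "rh (lh x y + rh x y) z = rh (lh y x + rh y x) z"
    and su_bracket_left: "su (pr x y + su x y) z = su x (su y z) - su y (su x z)"
    and pr_su_left: "pr (su x y) z = - pr (pr y x) z"
    and pr_bracket_right: "pr x (pr y z + su y z) = pr (pr x y) z + su y (pr x z)"
    and pr_circ_right: "pr x (rh y z + lh y z) = lh (pr x y) z + rh y (pr x z)"
    and su_lh_right: "su x (lh y z) = lh (su x y) z + lh y (su x z + pr x z)"
    and su_rh_right: "su x (rh y z) = rh (su x y + pr x y) z + rh y (su x z)"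
    and pr_lh_left: "pr (lh x y) z = lh x (su y z + pr y z) + rh y (pr x z)"
    and su_circ_left: "su (rh x y + lh x y) z = rh x (su y z) + rh y (su x z)"
    and pr_rh_minus_lh_left: "pr (rh x y - lh y x) z = 0"
    and lh_su_plus_pr_left: "lh (su x y + pr y x) z = 0"
    and rh_sym_bracket_left: "rh (su x y + pr x y + su y x + pr y x) z = 0"
  using pre_dual_pre_Poisson unfolding pre_dual_pre_Poisson_def by blast+

lemma dual_pre_Poisson_circ_bracket:
  "dual_pre_Poisson s (\<lambda>x y. rh x y + lh x y) (\<lambda>x y. su x y + pr x y)"
  unfolding dual_pre_Poisson_def
  apply (intro conjI allI)
  subgoal by (intro bilinear_op_add bilinear)
  subgoal by (intro bilinear_op_add bilinear)
  subgoal for x y z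
    by (rule eq_by_combination3[OF lh_circ_right[of x y z] rh_rh_right[of x y z]
          lh_rh_left[of x y z, symmetric]]) (simp add: algebra_simps)
  subgoal for x y z
    by (rule eq_by_combination3[OF lh_lh_left[of x y z] rh_circ_left[of x y z]
          lh_lh_left[of y x z, symmetric]]) (simp add: algebra_simps)
  subgoal for x y z
    by (rule eq_by_combination4[OF su_bracket_left[of x y z, symmetric]
          pr_su_left[of x y z, symmetric] pr_bracket_right[of x y z]
          pr_bracket_right[of y x z, symmetric]]) (simp add: algebra_simps)
  subgoal for x y z
    by (rule eq_by_combination3[OF pr_circ_right[of x y z] su_lh_right[of x y z]
          su_rh_right[of x y z]]) (simp add: algebra_simps)
  subgoal for x y z
    by (rule eq_by_combination4[OF pr_lh_left[of x y z] su_circ_left[of x y z]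
          pr_rh_minus_lh_left[of x y z] pr_lh_left[of y x z]]) (simp add: algebra_simps)
  subgoal for x y z
    by (rule eq_by_combination3[OF lh_su_plus_pr_left[of x y z] rh_sym_bracket_left[of x y z]
          lh_su_plus_pr_left[of y x z]]) (simp add: algebra_simps)
  done

lemma dual_pre_Poisson_rep_multiplications:
  "dual_pre_Poisson_rep s (\<lambda>x y. rh x y + lh x y) (\<lambda>x y. su x y + pr x y)
     s (\<lambda>x y. rh x y) (\<lambda>x y. lh y x) (\<lambda>x y. su x y) (\<lambda>x y. pr y x)"
  unfolding dual_pre_Poisson_rep_def fun_eq_iff comp_def
  apply (intro conjI allI vector_space lin_to_End_if_bilinear_op bilinear bilinear_op_swap)
  subgoal for x y v
    by (rule eq_by_combination1[OF lh_circ_right[of v y x, symmetric]]) (simp add: algebra_simps)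
  subgoal for x y v
    by (rule eq_by_combination3[OF lh_circ_right[of v y x] lh_lh_left[of v y x]
          lh_rh_left[of y v x]]) (simp add: algebra_simps)
  subgoal for x y v
    by (rule eq_by_combination1[OF lh_rh_left[of y v x, symmetric]]) (simp add: algebra_simps)
  subgoal for x y v
    by (rule eq_by_combination1[OF rh_rh_right[of x y v, symmetric]]) (simp add: algebra_simps)
  subgoal for x y v
    by (rule eq_by_combination3[OF rh_rh_right[of x y v] rh_circ_left[of x y v]
          rh_rh_right[of y x v, symmetric]]) (simp add: algebra_simps)
  subgoal for x y v
    by (rule eq_by_combination1[OF su_bracket_left[of x y v]]) (simp add: algebra_simps)
  subgoal for x y v
    by (rule eq_by_combination1[OF pr_bracket_right[of v x y]]) (simp add: algebra_simps)
  subgoal for x y v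
    by (rule eq_by_combination1[OF pr_su_left[of y v x]]) (simp add: algebra_simps)
  subgoal for x y v
    by (rule eq_by_combination1[OF pr_circ_right[of v x y]]) (simp add: algebra_simps)
  subgoal for x y v
    by (rule eq_by_combination1[OF su_lh_right[of x v y]]) (simp add: algebra_simps)
  subgoal for x y v
    by (rule eq_by_combination1[OF su_rh_right[of x y v]]) (simp add: algebra_simps)
  subgoal for x y v
    by (rule eq_by_combination1[OF pr_lh_left[of v y x]]) (simp add: algebra_simps)
  subgoal for x y v
    by (rule eq_by_combination1[OF su_circ_left[of x y v]]) (simp add: algebra_simps)
  subgoal for x y v
    by (rule eq_by_combination1[OF pr_rh_minus_lh_left[of y v x]]) (simp add: algebra_simps)
  subgoal for x y v
    by (rule eq_by_combination1[OF lh_su_plus_pr_left[of y v x]]) (simp add: algebra_simps)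
  subgoal for x y v
    by (rule eq_by_combination1[OF rh_sym_bracket_left[of x y v]]) (simp add: algebra_simps)
  done

lemma pre_Poisson_if_opposite:
  assumes lh_opposite: "\<And>x y. lh x y = rh y x"
    and pr_opposite: "\<And>x y. pr x y = - su y x"
  shows "pre_Poisson s su rh"
  unfolding pre_Poisson_def
  apply (intro conjI allI bilinear)
  subgoal for x y z
    by (rule eq_by_combination1[OF su_bracket_left[of x y z, symmetric]])
      (simp add: lh_opposite pr_opposite algebra_simps)
  subgoal for x y z
    by (rule eq_by_combination1[OF rh_rh_right[of x y z]])
      (simp add: lh_opposite pr_opposite algebra_simps)
  subgoal for x y z
    by (rule eq_by_combination1[OF su_rh_right[of x y z, symmetric]])
      (simp add: lh_opposite pr_opposite algebra_simps)
  subgoal for x y z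
    by (rule eq_by_combination1[OF su_circ_left[of x y z]])
      (simp add: lh_opposite pr_opposite algebra_simps)
  done

end

theorem proposition3p26:
  fixes s :: "'k::field_char_0 \<Rightarrow> 'a::ab_group_add \<Rightarrow> 'a"
    and rh lh su pr :: "'a \<Rightarrow> 'a \<Rightarrow> 'a"
  assumes "vector_space s"
    and "pre_dual_pre_Poisson s rh lh su pr"
  shows "(dual_pre_Poisson s (\<lambda>x y. rh x y + lh x y) (\<lambda>x y. su x y + pr x y)
       \<and> dual_pre_Poisson_rep s (\<lambda>x y. rh x y + lh x y) (\<lambda>x y. su x y + pr x y)
           s (\<lambda>x y. rh x y) (\<lambda>x y. lh y x) (\<lambda>x y. su x y) (\<lambda>x y. pr y x))
       \<and> ((\<forall>x y. lh x y = rh y x \<and> pr x y = - su y x) \<longrightarrow>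
         pre_Poisson s su rh
       \<and> Poisson s (\<lambda>x y. rh x y + rh y x) (\<lambda>x y. su x y - su y x))"
proof -
  interpret pre_dual_pre_Poisson_algebra s rh lh su pr
    by unfold_locales (fact assms(2))
  have "pre_Poisson s su rh" if "\<forall>x y. lh x y = rh y x \<and> pr x y = - su y x"
    using that by (intro pre_Poisson_if_opposite) simp_all
  then show ?thesis
    using dual_pre_Poisson_circ_bracket dual_pre_Poisson_rep_multiplications
      Poisson_if_pre_Poisson by blast
qed

end
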